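(* Let $m\ge2$ and $f_1,\dots,f_m:X\to\mathbb R_{+\infty}$ with $\bigcap_{i=1}^m\operatorname{dom} f_i\ne\emptyset$. Assume $$\operatorname{cl}\Big(\sum_{i=1}^m\operatorname{epi} f_i^*\Big)=\operatorname{epi}\Big(\sum_{i=1}^mf_i\Big)^*,$$ where the closure is taken in $\mathcal L\times\mathbb R$. Then for all $x\in\bigcap_{i=1}^m\operatorname{dom} f_i$ and all $\varepsilon\ge0$, $$\partial_\varepsilon\Big(\sum_{i=1}^m f_i\Big)(x)=\bigcap_{\eta>0}\operatorname{cl}\Big(\bigcup_{\substack{\varepsilon_i\ge0,\ \sum_{i=1}^m\varepsilon_i=\varepsilon+\eta}}\ \sum_{i=1}^m\partial_{\varepsilon_i}f_i(x)\Big).$$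
   Context: $X$ is a nonempty set; $\mathbb R_{+\infty}=\mathbb R\cup\{+\infty\}$. $\mathcal L$ is a family of functions $X\to\mathbb R$ closed under pointwise addition and real scalar multiplication, equipped with the pointwise convergence topology (weakest topology making all evaluations $l\mapsto l(x)$ continuous); $\mathcal L\times\mathbb R$ carries the product topology; $\operatorname{cl}$ denotes closure. For $f:X\to\mathbb R_{+\infty}$: $\operatorname{dom} f=\{x:f(x)<+\infty\}$; $f^*(l)=\sup_{x\in X}(l(x)-f(x))$; $\operatorname{epi} f^*=\{(l,r)\in\mathcal L\times\mathbb R:f^*(l)\le r\}$; for $\varepsilon\ge0$, $x\in\operatorname{dom} f$, $\partial_\varepsilon f(x)=\{l\in\mathcal L: f(y)-f(x)-(l(y)-l(x))+\varepsilon\ge0\ \forall y\in X\}$. Sums of subsets (of $\mathcal L$ or of $\mathcal L\times\mathbb R$) are Minkowski sums. *)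

theory Defs
  imports "HOL-Analysis.Analysis"
begin

text \<open>X is a type 'x; functions into R_{+inf} are ereal-valued functions never equal to -inf.
The family L is a set of real functions on 'x; it carries the subspace topology of the
pointwise (product) topology on 'x \<Rightarrow> real, and L \<times> R carries the product topology.\<close>

definition lin_family :: "('x \<Rightarrow> real) set \<Rightarrow> bool" where
  "lin_family L \<longleftrightarrow> (\<forall>l\<in>L. \<forall>k\<in>L. (\<lambda>x. l x + k x) \<in> L) \<and> (\<forall>c::real. \<forall>l\<in>L. (\<lambda>x. c * l x) \<in> L)"

definition edom :: "('x \<Rightarrow> ereal) \<Rightarrow> 'x set" where
  "edom f = {x. f x < \<infinity>}"

definition conj :: "('x \<Rightarrow> ereal) \<Rightarrow> ('x \<Rightarrow> real) \<Rightarrow> ereal" where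
  "conj f l = (SUP x. ereal (l x) - f x)"

definition epi_conj :: "('x \<Rightarrow> real) set \<Rightarrow> ('x \<Rightarrow> ereal) \<Rightarrow> (('x \<Rightarrow> real) \<times> real) set" where
  "epi_conj L f = {(l, r). l \<in> L \<and> conj f l \<le> ereal r}"

definition eps_subdiff :: "('x \<Rightarrow> real) set \<Rightarrow> real \<Rightarrow> ('x \<Rightarrow> ereal) \<Rightarrow> 'x \<Rightarrow> ('x \<Rightarrow> real) set" where
  "eps_subdiff L \<epsilon> f x = {l \<in> L. \<forall>y. f y - f x - ereal (l y - l x) + ereal \<epsilon> \<ge> 0}"

definition msum_fun :: "'i set \<Rightarrow> ('i \<Rightarrow> ('x \<Rightarrow> real) set) \<Rightarrow> ('x \<Rightarrow> real) set" where
  "msum_fun I A = {(\<lambda>x. \<Sum>i\<in>I. a i x) | a. \<forall>i\<in>I. a i \<in> A i}"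

definition msum_pair :: "'i set \<Rightarrow> ('i \<Rightarrow> (('x \<Rightarrow> real) \<times> real) set) \<Rightarrow> (('x \<Rightarrow> real) \<times> real) set" where
  "msum_pair I A = {((\<lambda>x. \<Sum>i\<in>I. fst (a i) x), (\<Sum>i\<in>I. snd (a i))) | a. \<forall>i\<in>I. a i \<in> A i}"

definition clL :: "('x \<Rightarrow> real) set \<Rightarrow> ('x \<Rightarrow> real) set \<Rightarrow> ('x \<Rightarrow> real) set" where
  "clL L A = closure A \<inter> L"

definition clLR :: "('x \<Rightarrow> real) set \<Rightarrow> (('x \<Rightarrow> real) \<times> real) set \<Rightarrow> (('x \<Rightarrow> real) \<times> real) set" where
  "clLR L A = closure A \<inter> (L \<times> UNIV)"

end

theory Submission imports Defs begin

text \<open>Write \<open>F = \<Sum>\<^sub>i f\<^sub>i\<close> and \<open>C = F x\<close>. Both sides are governed by the Fenchel--Young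
characterisation \<open>l \<in> \<partial>\<^sub>\<epsilon>g(x) \<longleftrightarrow> (l, \<epsilon> + l x - g x) \<in> epi g\<^sup>*\<close>.
Sums of \<open>\<epsilon>\<^sub>i\<close>-subgradients are \<open>(\<Sum>\<epsilon>\<^sub>i)\<close>-subgradients of \<open>F\<close>, and \<open>\<partial>\<^sub>\<epsilon>F(x)\<close> is closed in the
pointwise topology and the intersection of the \<open>\<partial>\<^sub>\<epsilon>\<^sub>+\<^sub>\<eta>F(x)\<close>; this gives one inclusion without
any hypothesis. Conversely, if \<open>l \<in> \<partial>\<^sub>\<epsilon>F(x)\<close> then \<open>(l, \<epsilon> + l x - C)\<close> lies in the closure of
\<open>\<Sum> epi f\<^sub>i\<^sup>*\<close>, so it is approximated by sums \<open>\<Sum>(a\<^sub>i, r\<^sub>i)\<close> with \<open>\<Sum>r\<^sub>i - \<Sum>a\<^sub>i x + C < \<epsilon> + \<eta>\<close>;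
each \<open>a\<^sub>i\<close> is an \<open>(r\<^sub>i + f\<^sub>i x - a\<^sub>i x)\<close>-subgradient of \<open>f\<^sub>i\<close>, and the remaining slack is added to
one of the \<open>\<epsilon>\<^sub>i\<close>.\<close>

definition sum_eps_subdiffs ::
    "('x \<Rightarrow> real) set \<Rightarrow> 'i set \<Rightarrow> ('i \<Rightarrow> 'x \<Rightarrow> ereal) \<Rightarrow> 'x \<Rightarrow> real \<Rightarrow> ('x \<Rightarrow> real) set" where
  "sum_eps_subdiffs L I f x \<delta> = \<Union>{msum_fun I (\<lambda>i. eps_subdiff L (e i) (f i) x) | e.
      (\<forall>i\<in>I. e i \<ge> 0) \<and> (\<Sum>i\<in>I. e i) = \<delta>}"

lemma conj_le_ereal_iff:
  assumes "\<And>y. g y \<noteq> -\<infinity>"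
  shows "conj g l \<le> ereal r \<longleftrightarrow> (\<forall>y. ereal (l y - r) \<le> g y)"
proof -
  have "ereal (l y) - g y \<le> ereal r \<longleftrightarrow> ereal (l y - r) \<le> g y" for y
    using assms[of y] by (cases "g y") auto
  then show ?thesis unfolding conj_def SUP_le_iff by simp
qed

lemma eps_subdiff_iff:
  assumes "\<And>y. g y \<noteq> -\<infinity>" and "g x = ereal c"
  shows "l \<in> eps_subdiff L e g x \<longleftrightarrow> l \<in> L \<and> (\<forall>y. ereal (l y - l x - e + c) \<le> g y)"
proof -
  have "0 \<le> g y - g x - ereal (l y - l x) + ereal e \<longleftrightarrow> ereal (l y - l x - e + c) \<le> g y" for y
    using assms(1)[of y] assms(2) by (cases "g y") auto
  then show ?thesis unfolding eps_subdiff_def by simp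
qed

lemma eps_subdiff_iff_epi_conj:
  assumes "\<And>y. g y \<noteq> -\<infinity>" and "g x = ereal c"
  shows "l \<in> eps_subdiff L e g x \<longleftrightarrow> (l, e + l x - c) \<in> epi_conj L g"
  by (simp add: eps_subdiff_iff[where g=g, OF assms] epi_conj_def
      conj_le_ereal_iff[where g=g, OF assms(1)] algebra_simps)

lemma epi_conj_fenchel_young:
  assumes "\<And>y. g y \<noteq> -\<infinity>" and "g x = ereal c" and "(l, r) \<in> epi_conj L g"
  shows "l x - r \<le> c"
proof -
  have "ereal (l x - r) \<le> g x"
    using assms(3) conj_le_ereal_iff[where g=g, OF assms(1)] by (simp add: epi_conj_def)
  then show ?thesis using assms(2) by simp
qed

lemma eps_subdiff_mono:
  assumes "e \<le> e'"
  shows "eps_subdiff L e g x \<subseteq> eps_subdiff L e' g x"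
proof -
  have "A + ereal e \<le> A + ereal e'" for A
    using assms by (cases A) auto
  then show ?thesis by (auto simp: eps_subdiff_def intro: order_trans)
qed

lemma mem_eps_subdiff_if_all_larger:
  assumes "\<And>y. g y \<noteq> -\<infinity>" and "g x = ereal c"
    and "\<And>\<eta>. \<eta> > 0 \<Longrightarrow> l \<in> eps_subdiff L (e + \<eta>) g x"
  shows "l \<in> eps_subdiff L e g x"
proof -
  have "ereal (l y - l x - e + c) \<le> g y" for y
  proof (cases "g y")
    case (real d)
    have "l y - l x - e + c \<le> d + \<eta>" if "\<eta> > 0" for \<eta>
    proof -
      have "ereal (l y - l x - (e + \<eta>) + c) \<le> g y"
        using assms(3)[OF that] by (simp add: eps_subdiff_iff[where g=g, OF assms(1,2)])
      then show ?thesis using real by simp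
    qed
    then show ?thesis using real by (simp add: field_le_epsilon)
  qed (use assms(1) in auto)
  moreover have "l \<in> L" using assms(3)[of 1] by (simp add: eps_subdiff_def)
  ultimately show ?thesis by (simp add: eps_subdiff_iff[where g=g, OF assms(1,2)])
qed

lemma closed_eps_subdiff_UNIV:
  assumes "\<And>y. g y \<noteq> -\<infinity>" and "g x = ereal c"
  shows "closed (eps_subdiff UNIV e g x)"
proof -
  have "closed {l. ereal (l y - l x - e + c) \<le> g y}" for y
  proof (cases "g y")
    case (real d)
    have "closed {l. l y - l x - e + c \<le> d}"
      by (intro closed_Collect_le continuous_intros continuous_on_product_coordinates)
    then show ?thesis using real by simp
  qed (use assms(1) in auto)
  then have "closed (\<Inter>y. {l. ereal (l y - l x - e + c) \<le> g y})" by blast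
  moreover have "eps_subdiff UNIV e g x = (\<Inter>y. {l. ereal (l y - l x - e + c) \<le> g y})"
    by (auto simp: eps_subdiff_iff[where g=g, OF assms])
  ultimately show ?thesis by simp
qed

lemma sum_ereal_not_minf:
  assumes "\<And>i. i \<in> I \<Longrightarrow> (g i :: ereal) \<noteq> -\<infinity>"
  shows "(\<Sum>i\<in>I. g i) \<noteq> -\<infinity>"
  using assms by (induction I rule: infinite_finite_induct) auto

context
  fixes I :: "'i set" and f :: "'i \<Rightarrow> 'x \<Rightarrow> ereal" and x :: 'x and c :: "'i \<Rightarrow> real"
  assumes finite_I: "finite I"
    and f_not_minf: "\<And>i y. i \<in> I \<Longrightarrow> f i y \<noteq> -\<infinity>"
    and f_at_x: "\<And>i. i \<in> I \<Longrightarrow> f i x = ereal (c i)"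
begin

lemma sum_f_not_minf: "(\<Sum>i\<in>I. f i y) \<noteq> -\<infinity>"
  by (rule sum_ereal_not_minf) (rule f_not_minf)

lemma sum_f_at_x: "(\<Sum>i\<in>I. f i x) = ereal (\<Sum>i\<in>I. c i)"
  by (simp add: f_at_x)

lemma eps_subdiff_f_iff:
  "i \<in> I \<Longrightarrow> l \<in> eps_subdiff L e (f i) x \<longleftrightarrow> l \<in> L \<and> (\<forall>y. ereal (l y - l x - e + c i) \<le> f i y)"
  using eps_subdiff_iff[where g="f i"] f_not_minf f_at_x by blast

lemma eps_subdiff_f_iff_epi_conj:
  "i \<in> I \<Longrightarrow> l \<in> eps_subdiff L e (f i) x \<longleftrightarrow> (l, e + l x - c i) \<in> epi_conj L (f i)"
  using eps_subdiff_iff_epi_conj[where g="f i"] f_not_minf f_at_x by blast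

lemma sum_mem_eps_subdiff:
  assumes "\<And>i. i \<in> I \<Longrightarrow> a i \<in> eps_subdiff L (e i) (f i) x"
  shows "(\<lambda>z. \<Sum>i\<in>I. a i z) \<in> eps_subdiff UNIV (\<Sum>i\<in>I. e i) (\<lambda>y. \<Sum>i\<in>I. f i y) x"
proof -
  have "ereal (\<Sum>i\<in>I. a i y - a i x - e i + c i) \<le> (\<Sum>i\<in>I. f i y)" for y
  proof -
    have "(\<Sum>i\<in>I. ereal (a i y - a i x - e i + c i)) \<le> (\<Sum>i\<in>I. f i y)"
      using assms by (intro sum_mono) (simp add: eps_subdiff_f_iff)
    then show ?thesis by simp
  qed
  then show ?thesis
    by (simp add: eps_subdiff_iff[where g="\<lambda>y. \<Sum>i\<in>I. f i y", OF sum_f_not_minf sum_f_at_x]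
        sum.distrib sum_subtractf)
qed

lemma sum_eps_subdiffs_subset:
  "sum_eps_subdiffs L I f x \<delta> \<subseteq> eps_subdiff UNIV \<delta> (\<lambda>y. \<Sum>i\<in>I. f i y) x"
  unfolding sum_eps_subdiffs_def msum_fun_def using sum_mem_eps_subdiff by fastforce

lemma Inter_closure_sum_eps_subdiffs_subset:
  "(\<Inter>\<eta>\<in>{0<..}. clL L (sum_eps_subdiffs L I f x (\<epsilon> + \<eta>)))
     \<subseteq> eps_subdiff L \<epsilon> (\<lambda>y. \<Sum>i\<in>I. f i y) x"
proof
  fix l assume l: "l \<in> (\<Inter>\<eta>\<in>{0<..}. clL L (sum_eps_subdiffs L I f x (\<epsilon> + \<eta>)))"
  show "l \<in> eps_subdiff L \<epsilon> (\<lambda>y. \<Sum>i\<in>I. f i y) x"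
  proof (rule mem_eps_subdiff_if_all_larger[where g="\<lambda>y. \<Sum>i\<in>I. f i y", OF sum_f_not_minf sum_f_at_x])
    fix \<eta> :: real assume "\<eta> > 0"
    have "closure (sum_eps_subdiffs L I f x (\<epsilon> + \<eta>))
            \<subseteq> eps_subdiff UNIV (\<epsilon> + \<eta>) (\<lambda>y. \<Sum>i\<in>I. f i y) x"
      by (intro closure_minimal sum_eps_subdiffs_subset
          closed_eps_subdiff_UNIV[where g="\<lambda>y. \<Sum>i\<in>I. f i y", OF sum_f_not_minf sum_f_at_x])
    then show "l \<in> eps_subdiff L (\<epsilon> + \<eta>) (\<lambda>y. \<Sum>i\<in>I. f i y) x"
      using l \<open>\<eta> > 0\<close> by (auto simp: clL_def eps_subdiff_def)
  qed
qed

lemma msum_epi_conj_in_sum_eps_subdiffs: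
  assumes "i\<^sub>0 \<in> I" and "(k, s) \<in> msum_pair I (\<lambda>i. epi_conj L (f i))"
    and "s - k x + (\<Sum>i\<in>I. c i) \<le> \<delta>"
  shows "k \<in> sum_eps_subdiffs L I f x \<delta>"
proof -
  obtain a r where ar: "\<And>i. i \<in> I \<Longrightarrow> (a i, r i) \<in> epi_conj L (f i)"
    and k: "k = (\<lambda>z. \<Sum>i\<in>I. a i z)" and s: "s = (\<Sum>i\<in>I. r i)"
    using assms(2) unfolding msum_pair_def
    by clarsimp (metis prod.collapse)
  define d where "d i = r i + c i - a i x" for i
  have d_nonneg: "d i \<ge> 0" if "i \<in> I" for i
    using epi_conj_fenchel_young[where g="f i", OF _ f_at_x ar] f_not_minf that by (simp add: d_def)
  define e where "e i = d i + (if i = i\<^sub>0 then \<delta> - (\<Sum>j\<in>I. d j) else 0)" for i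
  have sum_d: "(\<Sum>i\<in>I. d i) = s - k x + (\<Sum>i\<in>I. c i)"
    by (simp add: d_def k s sum.distrib sum_subtractf)
  have e_ge_d: "d i \<le> e i" for i
    using assms(3) sum_d by (simp add: e_def)
  have sum_e: "(\<Sum>i\<in>I. e i) = \<delta>"
    using finite_I assms(1) by (simp add: e_def sum.distrib)
  have "a i \<in> eps_subdiff L (e i) (f i) x" if "i \<in> I" for i
  proof -
    have "a i \<in> eps_subdiff L (d i) (f i) x"
      using ar[OF that] by (simp add: eps_subdiff_f_iff_epi_conj that d_def)
    then show ?thesis by (rule subsetD[OF eps_subdiff_mono[OF e_ge_d]])
  qed
  then have "k \<in> msum_fun I (\<lambda>i. eps_subdiff L (e i) (f i) x)"
    unfolding msum_fun_def k by blast
  then show ?thesis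
    unfolding sum_eps_subdiffs_def using e_ge_d d_nonneg sum_e order_trans by blast
qed

lemma eps_subdiff_sum_subset_closure:
  assumes "I \<noteq> {}" and "\<eta> > 0"
    and epi_sum: "epi_conj L (\<lambda>y. \<Sum>i\<in>I. f i y) \<subseteq> closure (msum_pair I (\<lambda>i. epi_conj L (f i)))"
  shows "eps_subdiff L \<epsilon> (\<lambda>y. \<Sum>i\<in>I. f i y) x \<subseteq> clL L (sum_eps_subdiffs L I f x (\<epsilon> + \<eta>))"
proof
  fix l assume l: "l \<in> eps_subdiff L \<epsilon> (\<lambda>y. \<Sum>i\<in>I. f i y) x"
  define C where "C = (\<Sum>i\<in>I. c i)"
  define S where "S = msum_pair I (\<lambda>i. epi_conj L (f i))"
  define N where "N = {p :: ('x \<Rightarrow> real) \<times> real. snd p - fst p x + C < \<epsilon> + \<eta>}"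
  have "(l, \<epsilon> + l x - C) \<in> closure S"
    using l epi_sum unfolding S_def C_def
    by (auto simp: eps_subdiff_iff_epi_conj[where g="\<lambda>y. \<Sum>i\<in>I. f i y", OF sum_f_not_minf sum_f_at_x])
  moreover have "open N"
    unfolding N_def
    by (intro open_Collect_less continuous_intros continuous_on_compose2[OF
          continuous_on_product_coordinates continuous_on_fst]) auto
  moreover have "(l, \<epsilon> + l x - C) \<in> N" using \<open>\<eta> > 0\<close> by (simp add: N_def)
  ultimately have "(l, \<epsilon> + l x - C) \<in> closure (N \<inter> S)"
    using open_Int_closure_subset by blast
  moreover have "fst ` (N \<inter> S) \<subseteq> sum_eps_subdiffs L I f x (\<epsilon> + \<eta>)"
    using msum_epi_conj_in_sum_eps_subdiffs assms(1) unfolding N_def S_def C_def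
    by fastforce
  then have "fst ` (N \<inter> S) \<subseteq> closure (sum_eps_subdiffs L I f x (\<epsilon> + \<eta>))"
    using closure_subset by blast
  then have "fst ` closure (N \<inter> S) \<subseteq> closure (sum_eps_subdiffs L I f x (\<epsilon> + \<eta>))"
    by (intro image_closure_subset continuous_intros) auto
  ultimately have "l \<in> closure (sum_eps_subdiffs L I f x (\<epsilon> + \<eta>))" by force
  then show "l \<in> clL L (sum_eps_subdiffs L I f x (\<epsilon> + \<eta>))"
    using l by (simp add: clL_def eps_subdiff_def)
qed

end

theorem mainTheorem10:
  fixes L :: "('x \<Rightarrow> real) set" and m :: nat and f :: "nat \<Rightarrow> 'x \<Rightarrow> ereal"
  assumes "lin_family L"
    and "m \<ge> 2"
    and "\<And>i y. i \<in> {1..m} \<Longrightarrow> f i y \<noteq> -\<infinity>"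
    and "(\<Inter>i\<in>{1..m}. edom (f i)) \<noteq> {}"
    and "clLR L (msum_pair {1..m} (\<lambda>i. epi_conj L (f i)))
           = epi_conj L (\<lambda>y. \<Sum>i\<in>{1..m}. f i y)"
  shows "\<forall>x\<in>(\<Inter>i\<in>{1..m}. edom (f i)). \<forall>\<epsilon>\<ge>0.
           eps_subdiff L \<epsilon> (\<lambda>y. \<Sum>i\<in>{1..m}. f i y) x
           = (\<Inter>\<eta>\<in>{0<..}. clL L (\<Union>{msum_fun {1..m} (\<lambda>i. eps_subdiff L (e i) (f i) x) | e.
                 (\<forall>i\<in>{1..m}. e i \<ge> 0) \<and> (\<Sum>i\<in>{1..m}. e i) = \<epsilon> + \<eta>}))"
proof (intro ballI allI impI)
  fix x and \<epsilon> :: real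
  assume "x \<in> (\<Inter>i\<in>{1..m}. edom (f i))"
  then have f_at_x: "f i x = ereal (real_of_ereal (f i x))" if "i \<in> {1..m}" for i
    using assms(3) that by (cases "f i x") (auto simp: edom_def)
  have epi_sum: "epi_conj L (\<lambda>y. \<Sum>i\<in>{1..m}. f i y)
      \<subseteq> closure (msum_pair {1..m} (\<lambda>i. epi_conj L (f i)))"
    using assms(5) unfolding clLR_def by blast
  have "eps_subdiff L \<epsilon> (\<lambda>y. \<Sum>i\<in>{1..m}. f i y) x
      = (\<Inter>\<eta>\<in>{0<..}. clL L (sum_eps_subdiffs L {1..m} f x (\<epsilon> + \<eta>)))"
    using eps_subdiff_sum_subset_closure[where I="{1..m}" and f=f, OF _ assms(3) f_at_x _ _ epi_sum]
      Inter_closure_sum_eps_subdiffs_subset[where I="{1..m}" and f=f, OF _ assms(3) f_at_x] assms(2)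
    by (intro equalityI) auto
  then show "eps_subdiff L \<epsilon> (\<lambda>y. \<Sum>i\<in>{1..m}. f i y) x
           = (\<Inter>\<eta>\<in>{0<..}. clL L (\<Union>{msum_fun {1..m} (\<lambda>i. eps_subdiff L (e i) (f i) x) | e.
                 (\<forall>i\<in>{1..m}. e i \<ge> 0) \<and> (\<Sum>i\<in>{1..m}. e i) = \<epsilon> + \<eta>}))"
    by (simp add: sum_eps_subdiffs_def)
qed

end
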